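(* Let $G=(V,E)$ be an event graph and let $\mathcal C$ be any sink component of $\mathrm{dec}(G)$. Then for every vertex $v\in V$ there exists a subset $Y\subseteq\mathcal U_{|V}$ such that $(v,Y)$ is a node of $\mathcal C$.
   Context: An event graph is a finite, connected, undirected graph $G=(V,E)$, with $n=|V|$, in which every node $v$ carries a label that is either $\mathtt{i}x_v$ (insertion of $x_v$) or $\mathtt{d}x_v$ (deletion of $x_v$), where $x_v$ is an element of a finite universe $\mathcal U$. Write $\mathcal U_{|V}=\{x_v : v\in V\}$. It is assumed that for each $x\in\mathcal U_{|V}$ at least one node is labeled $\mathtt{i}x$ and at least one node is labeled $\mathtt{d}x$. The decorated graph $\mathrm{dec}(G)$ is the directed graph with vertex set $V\times 2^{\mathcal U_{|V}}$ in which $((u,X),(v,Y))$ is an edge if and only if $\{u,v\}\in E$ and $Y=X\cup\{x_v\}$ when $v$ is labeled $\mathtt{i}x_v$, respectively $Y=X\setminus\{x_v\}$ when $v$ is labeled $\mathtt{d}x_v$. A sink component of $\mathrm{dec}(G)$ is a strongly connected component of $\mathrm{dec}(G)$ from which no edge leads to a different strongly connected component. *)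

theory Defs
  imports Main
begin

datatype 'u event = Ins 'u | Del 'u

fun elem :: "'u event \<Rightarrow> 'u" where
  "elem (Ins x) = x" | "elem (Del x) = x"

definition event_graph :: "'v set \<Rightarrow> 'v set set \<Rightarrow> ('v \<Rightarrow> 'u event) \<Rightarrow> bool" where
  "event_graph V E lab \<longleftrightarrow>
     finite V \<and> V \<noteq> {} \<and>
     (\<forall>e\<in>E. e \<subseteq> V \<and> card e = 2) \<and>
     (\<forall>u\<in>V. \<forall>v\<in>V. (u, v) \<in> {(a, b). {a, b} \<in> E}\<^sup>*) \<and>
     (\<forall>x \<in> elem ` lab ` V. (\<exists>v\<in>V. lab v = Ins x) \<and> (\<exists>v\<in>V. lab v = Del x))"

definition univ_V :: "'v set \<Rightarrow> ('v \<Rightarrow> 'u event) \<Rightarrow> 'u set" where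
  "univ_V V lab = elem ` lab ` V"

fun apply_ev :: "'u event \<Rightarrow> 'u set \<Rightarrow> 'u set" where
  "apply_ev (Ins x) X = X \<union> {x}" | "apply_ev (Del x) X = X - {x}"

definition dec_nodes :: "'v set \<Rightarrow> ('v \<Rightarrow> 'u event) \<Rightarrow> ('v \<times> 'u set) set" where
  "dec_nodes V lab = V \<times> Pow (univ_V V lab)"

definition dec_edges :: "'v set \<Rightarrow> 'v set set \<Rightarrow> ('v \<Rightarrow> 'u event)
    \<Rightarrow> (('v \<times> 'u set) \<times> ('v \<times> 'u set)) set" where
  "dec_edges V E lab = {((u, X), (v, Y)).
      (u, X) \<in> dec_nodes V lab \<and> (v, Y) \<in> dec_nodes V lab \<and>
      {u, v} \<in> E \<and> Y = apply_ev (lab v) X}"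

definition scc :: "'a set \<Rightarrow> ('a \<times> 'a) set \<Rightarrow> 'a set \<Rightarrow> bool" where
  "scc N R C \<longleftrightarrow> (\<exists>c\<in>N. C = {d \<in> N. (c, d) \<in> R\<^sup>* \<and> (d, c) \<in> R\<^sup>*})"

definition sink_component :: "'a set \<Rightarrow> ('a \<times> 'a) set \<Rightarrow> 'a set \<Rightarrow> bool" where
  "sink_component N R C \<longleftrightarrow> scc N R C \<and> (\<forall>a\<in>C. \<forall>b. (a, b) \<in> R \<longrightarrow> b \<in> C)"

end

theory Submission
  imports Defs
begin

(* The idea: C is nonempty, say (u, X) is in C.  Any walk u = w0, w1, ..., wk = v
   of the connected graph G lifts to a walk in dec(G) starting at (u, X):
   from (w_i, X_i) one steps to (w_{i+1}, apply_ev (lab w_{i+1}) X_i), and the new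
   set stays inside U_V because the element of the label of w_{i+1} lies in U_V.
   A sink component is closed under reachability, so the end of the lifted walk,
   a node of the form (v, Y), lies in C. *)

lemma scc_nonempty_subset:
  assumes "scc N R C"
  shows "C \<noteq> {}" and "C \<subseteq> N"
  using assms unfolding scc_def by auto

lemma sink_component_reach_closed:
  assumes "sink_component N R C" and "a \<in> C" and "(a, b) \<in> R\<^sup>*"
  shows "b \<in> C"
  using assms(3,2)
proof (induction rule: rtrancl_induct)
  case base
  then show ?case .
next
  case (step b d)
  then show ?case using assms(1) unfolding sink_component_def by blast
qed

lemma apply_ev_univ_V:
  assumes "X \<subseteq> univ_V V lab" and "v \<in> V"
  shows "apply_ev (lab v) X \<subseteq> univ_V V lab"
proof -
  have "elem (lab v) \<in> univ_V V lab" using assms(2) by (simp add: univ_V_def)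
  then show ?thesis using assms(1) by (cases "lab v") auto
qed

lemma dec_edge_step:
  assumes "(u, X) \<in> dec_nodes V lab" and "{u, v} \<in> E" and "v \<in> V"
  shows "((u, X), (v, apply_ev (lab v) X)) \<in> dec_edges V E lab"
proof -
  have "(v, apply_ev (lab v) X) \<in> dec_nodes V lab"
    using assms(1,3) apply_ev_univ_V[of X V lab v] by (simp add: dec_nodes_def)
  then show ?thesis using assms(1,2) by (simp add: dec_edges_def)
qed

lemma dec_walk_lift:
  assumes edges_in_V: "\<forall>e\<in>E. e \<subseteq> V"
    and walk: "(u, v) \<in> {(a, b). {a, b} \<in> E}\<^sup>*"
    and start: "(u, X) \<in> dec_nodes V lab"
  shows "\<exists>Y. (v, Y) \<in> dec_nodes V lab \<and> ((u, X), (v, Y)) \<in> (dec_edges V E lab)\<^sup>*"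
  using walk
proof (induction rule: rtrancl_induct)
  case base
  then show ?case using start by blast
next
  case (step b d)
  then obtain Y where b_node: "(b, Y) \<in> dec_nodes V lab"
    and reach_b: "((u, X), (b, Y)) \<in> (dec_edges V E lab)\<^sup>*" by blast
  have bd: "{b, d} \<in> E" using step.hyps(2) by simp
  then have "d \<in> V" using edges_in_V by blast
  have edge: "((b, Y), (d, apply_ev (lab d) Y)) \<in> dec_edges V E lab"
    using b_node bd \<open>d \<in> V\<close> by (rule dec_edge_step)
  then have "(d, apply_ev (lab d) Y) \<in> dec_nodes V lab"
    by (simp add: dec_edges_def)
  moreover have "((u, X), (d, apply_ev (lab d) Y)) \<in> (dec_edges V E lab)\<^sup>*"
    using reach_b edge by (rule rtrancl.rtrancl_into_rtrancl)
  ultimately show ?case by blast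
qed

theorem mainTheorem1:
  fixes V :: "'v set" and E :: "'v set set" and lab :: "'v \<Rightarrow> 'u event"
    and C :: "('v \<times> 'u set) set"
  assumes "event_graph V E lab"
    and "sink_component (dec_nodes V lab) (dec_edges V E lab) C"
  shows "\<forall>v\<in>V. \<exists>Y. Y \<subseteq> univ_V V lab \<and> (v, Y) \<in> C"
proof
  fix v assume "v \<in> V"
  have C_nodes: "C \<subseteq> dec_nodes V lab" and "C \<noteq> {}"
    using assms(2) scc_nonempty_subset unfolding sink_component_def by blast+
  then obtain u X where uX: "(u, X) \<in> C" by auto
  then have "u \<in> V" using C_nodes by (auto simp: dec_nodes_def)
  then have walk: "(u, v) \<in> {(a, b). {a, b} \<in> E}\<^sup>*" and edges_in_V: "\<forall>e\<in>E. e \<subseteq> V"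
    using assms(1) \<open>v \<in> V\<close> unfolding event_graph_def by blast+
  obtain Y where "(v, Y) \<in> dec_nodes V lab"
    and reach: "((u, X), (v, Y)) \<in> (dec_edges V E lab)\<^sup>*"
    using dec_walk_lift[OF edges_in_V walk] uX C_nodes by blast
  then have "Y \<subseteq> univ_V V lab" by (simp add: dec_nodes_def)
  moreover have "(v, Y) \<in> C"
    using sink_component_reach_closed[OF assms(2) uX reach] .
  ultimately show "\<exists>Y. Y \<subseteq> univ_V V lab \<and> (v, Y) \<in> C" by blast
qed

end
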